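(* Let $A_{12}\in\mathbb{R}_{\ge 0}^{m\times n}$ with $\mathrm{rank}(A_{12})=m$, and let $A_{22}=[a_{ij}]\in\mathbb{R}^{n\times n}$ satisfy: $a_{ij}\ge 0$ for $i\neq j$, $a_{ii}\le 0$; the directed graph on $\{1,\dots,n\}$ with an edge $j\to i$ whenever $i\ne j$ and $a_{ij}>0$ is weakly connected; and, with $s_i=\sum_{j\neq i}(a_{ij}+a_{ji})$, one has $s_i\le 2|a_{ii}|$ for all $i$ and $s_j<2|a_{jj}|$ for at least one $j$. Let $Q\in\mathfrak{C}_{n,k}$ satisfy $\mathrm{rank}(A_{12}Q)=k$. For $\phi\in\mathbb{R}$ define $R_\phi=Q^+A_{22}\big(I_n-(I_n-\phi QQ^+)A_{12}^{\dagger}A_{12}\big)$ and $M_\phi=R_\phi Q$. Then there exists $\psi\in\mathbb{R}$ such that $M_\phi$ is Hurwitz for every $\phi>\psi$.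
   Context: $\mathfrak{C}_{n,k}=\{X\in\{0,1\}^{n\times k}: X\mathbf{1}_k=\mathbf{1}_n\}$, with every column of $Q$ nonzero; $Q^+=(Q^\top Q)^{-1}Q^\top$. $A_{12}^{\dagger}=A_{12}^\top(A_{12}A_{12}^\top)^{-1}$ is the Moore–Penrose pseudo-inverse of the full-row-rank matrix $A_{12}$. (Equivalently, $R_\phi=Q^+A_{22}-LA_{12}$ with $L=(Q^+A_{22}-\phi\,Q^+A_{22}QQ^+)A_{12}^\dagger$.) A matrix is Hurwitz if all its eigenvalues have negative real part. *)

theory Defs
  imports "HOL-Analysis.Analysis"
begin

definition hurwitz :: "real^'k^'k \<Rightarrow> bool" where
  "hurwitz M \<longleftrightarrow> (\<forall>(lam::complex) (v::complex^'k).
      v \<noteq> 0 \<and> map_matrix complex_of_real M *v v = lam *s v \<longrightarrow> Re lam < 0)"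

definition clustering_matrix :: "real^'k^'n \<Rightarrow> bool" where
  "clustering_matrix Q \<longleftrightarrow> (\<forall>i j. Q $ i $ j = 0 \<or> Q $ i $ j = 1)
     \<and> (\<forall>i. (\<Sum>j\<in>UNIV. Q $ i $ j) = 1)
     \<and> (\<forall>j. \<exists>i. Q $ i $ j \<noteq> 0)"

definition left_pinv :: "real^'k^'n \<Rightarrow> real^'n^'k" where
  "left_pinv Q = matrix_inv (transpose Q ** Q) ** transpose Q"

text \<open>Moore-Penrose pseudo-inverse of a full-row-rank matrix: A^T (A A^T)^{-1}.\<close>
definition right_pinv :: "real^'n^'m \<Rightarrow> real^'m^'n" where
  "right_pinv A = transpose A ** matrix_inv (A ** transpose A)"

definition weakly_connected_graph :: "real^'n^'n \<Rightarrow> bool" where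
  "weakly_connected_graph A \<longleftrightarrow>
     (\<forall>x y. (x, y) \<in> {(u, v). u \<noteq> v \<and> (A $ u $ v > 0 \<or> A $ v $ u > 0)}\<^sup>*)"

definition R_mat :: "real^'n^'m \<Rightarrow> real^'n^'n \<Rightarrow> real^'k^'n \<Rightarrow> real \<Rightarrow> real^'n^'k" where
  "R_mat A12 A22 Q \<phi> = left_pinv Q ** A22 **
     (mat 1 - (mat 1 - \<phi> *\<^sub>R (Q ** left_pinv Q)) ** right_pinv A12 ** A12)"

definition M_mat :: "real^'n^'m \<Rightarrow> real^'n^'n \<Rightarrow> real^'k^'n \<Rightarrow> real \<Rightarrow> real^'k^'k" where
  "M_mat A12 A22 Q \<phi> = R_mat A12 A22 Q \<phi> ** Q"

end

theory Submission
  imports Defs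
begin

text \<open>
  \<open>M\<^sub>\<phi>\<close> is affine in \<open>\<phi>\<close>, say \<open>M\<^sub>\<phi> = M\<^sub>0 + \<phi> K\<close>. With \<open>P = A12\<^sup>\<dagger> A12\<close>, the orthogonal
  projection onto the row space of \<open>A12\<close>, the matrix \<open>S = Q\<^sup>T P Q\<close> is positive definite because
  \<open>A12 Q\<close> has full column rank, and \<open>S K = B\<^sup>T A22 B\<close> for the injective \<open>B = Q (Q\<^sup>T Q)\<^sup>-\<^sup>1 S\<close>.
  The hypotheses on \<open>A22\<close> make it negative definite: \<open>z\<^sup>T A22 z\<close> is a nonpositive combination
  of the \<open>z\<^sub>i\<^sup>2\<close> minus a nonnegative combination of the \<open>(z\<^sub>i - z\<^sub>j)\<^sup>2\<close> over the edges, and if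
  it vanishes then \<open>z\<close> is constant on the connected graph and zero at a strictly dominant vertex.
  Hence \<open>S K\<close>, and by compactness of the unit sphere also \<open>S M\<^sub>\<phi>\<close> for large \<open>\<phi>\<close>, is negative
  definite, so \<open>S\<close> is a Lyapunov matrix for \<open>M\<^sub>\<phi>\<close>: for an eigenpair \<open>(\<lambda>, x + i y)\<close>,
  \<open>Re \<lambda> (x\<^sup>T S x + y\<^sup>T S y) = x\<^sup>T S M\<^sub>\<phi> x + y\<^sup>T S M\<^sub>\<phi> y < 0\<close>.
\<close>

definition positive_definite :: "real^'n^'n \<Rightarrow> bool" where
  "positive_definite S \<longleftrightarrow> (\<forall>x. x \<noteq> 0 \<longrightarrow> x \<bullet> (S *v x) > 0)"

definition negative_definite :: "real^'n^'n \<Rightarrow> bool" where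
  "negative_definite S \<longleftrightarrow> (\<forall>x. x \<noteq> 0 \<longrightarrow> x \<bullet> (S *v x) < 0)"

lemma matrix_inv_right:
  fixes A :: "real^'n^'n"
  assumes "invertible A"
  shows "A ** matrix_inv A = mat 1"
  using assms unfolding invertible_def matrix_inv_def by (rule someI2_ex) blast

lemma transpose_matrix_inv_symmetric:
  fixes A :: "real^'n^'n"
  assumes "transpose A = A" and "invertible A"
  shows "transpose (matrix_inv A) = matrix_inv A"
proof -
  have "transpose (matrix_inv A) ** A = mat 1"
    by (metis assms matrix_inv_right matrix_transpose_mul transpose_mat)
  then have "transpose (matrix_inv A) ** A ** matrix_inv A = matrix_inv A"
    by simp
  then show ?thesis
    by (metis matrix_mul_assoc matrix_mul_rid matrix_inv_right[OF assms(2)])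
qed

lemma inner_matrix_vector_mult:
  fixes A :: "real^'n^'m"
  shows "x \<bullet> (A *v y) = (transpose A *v x) \<bullet> y"
  by (simp add: dot_lmul_matrix)

lemma quadratic_form_congruence:
  fixes A :: "real^'m^'m" and B :: "real^'n^'m"
  shows "x \<bullet> ((transpose B ** A ** B) *v x) = (B *v x) \<bullet> (A *v (B *v x))"
  by (simp only: matrix_vector_mul_assoc[symmetric] inner_matrix_vector_mult[of x "transpose B"]
      transpose_transpose)

lemma positive_definite_congruence:
  assumes "positive_definite A" and "inj ((*v) B)"
  shows "positive_definite (transpose B ** A ** B)"
  using assms unfolding positive_definite_def quadratic_form_congruence
  by (metis injD matrix_vector_mult_0_right)

lemma negative_definite_congruence:
  assumes "negative_definite A" and "inj ((*v) B)"
  shows "negative_definite (transpose B ** A ** B)"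
  using assms unfolding negative_definite_def quadratic_form_congruence
  by (metis injD matrix_vector_mult_0_right)

lemma positive_definite_Gram:
  fixes B :: "real^'n^'m"
  assumes "inj ((*v) B)"
  shows "positive_definite (transpose B ** B)"
  using positive_definite_congruence[OF _ assms, of "mat 1"]
  by (simp add: positive_definite_def)

lemma positive_definite_imp_invertible:
  assumes "positive_definite S"
  shows "invertible S"
proof -
  have "S *v x = 0 \<Longrightarrow> x = 0" for x
    using assms unfolding positive_definite_def by force
  then show ?thesis
    using matrix_left_invertible_ker invertible_left_inverse by blast
qed

lemma positive_definite_matrix_inv:
  assumes "positive_definite S"
  shows "positive_definite (matrix_inv S)"
  unfolding positive_definite_def
proof (intro allI impI)
  fix x :: "real^'a" assume "x \<noteq> 0"
  define w where "w = matrix_inv S *v x"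
  have x: "x = S *v w"
    by (simp add: w_def matrix_vector_mul_assoc matrix_inv_right positive_definite_imp_invertible assms)
  have "w \<noteq> 0" using \<open>x \<noteq> 0\<close> x by auto
  moreover have "x \<bullet> (matrix_inv S *v x) = w \<bullet> (S *v w)"
    by (metis w_def x inner_commute)
  ultimately show "x \<bullet> (matrix_inv S *v x) > 0"
    using assms unfolding positive_definite_def by simp
qed

lemma quadratic_form_degree_minus_differences:
  fixes A :: "real^'n^'n" and z :: "real^'n"
  shows "z \<bullet> (A *v z) = (\<Sum>i\<in>UNIV. (z$i)^2 * ((\<Sum>j\<in>UNIV. A$i$j + A$j$i) / 2))
           - (\<Sum>i\<in>UNIV. \<Sum>j\<in>UNIV. A$i$j * (z$i - z$j)^2) / 2"
proof -
  have "z \<bullet> (A *v z) = (\<Sum>i\<in>UNIV. \<Sum>j\<in>UNIV. A$i$j * z$i * z$j)"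
    by (simp add: inner_vec_def matrix_vector_mult_def sum_distrib_left mult_ac)
  also have "\<dots> = (\<Sum>i\<in>UNIV. \<Sum>j\<in>UNIV. A$i$j * (z$i)^2 / 2 + A$i$j * (z$j)^2 / 2
        - A$i$j * (z$i - z$j)^2 / 2)"
    by (intro sum.cong refl) (simp add: power2_eq_square field_simps)
  also have "\<dots> = (\<Sum>i\<in>UNIV. \<Sum>j\<in>UNIV. A$i$j * (z$i)^2 / 2)
        + (\<Sum>i\<in>UNIV. \<Sum>j\<in>UNIV. A$i$j * (z$j)^2 / 2)
        - (\<Sum>i\<in>UNIV. \<Sum>j\<in>UNIV. A$i$j * (z$i - z$j)^2) / 2"
    by (simp add: sum.distrib sum_subtractf sum_divide_distrib)
  also have "(\<Sum>i\<in>UNIV. \<Sum>j\<in>UNIV. A$i$j * (z$j)^2 / 2)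
      = (\<Sum>i\<in>UNIV. \<Sum>j\<in>UNIV. A$j$i * (z$i)^2 / 2)"
    by (rule sum.swap)
  also have "(\<Sum>i\<in>UNIV. \<Sum>j\<in>UNIV. A$i$j * (z$i)^2 / 2)
      + (\<Sum>i\<in>UNIV. \<Sum>j\<in>UNIV. A$j$i * (z$i)^2 / 2)
      = (\<Sum>i\<in>UNIV. (z$i)^2 * ((\<Sum>j\<in>UNIV. A$i$j + A$j$i) / 2))"
    by (simp add: sum.distrib[symmetric] sum_distrib_left sum_divide_distrib algebra_simps
        add_divide_distrib)
  finally show ?thesis .
qed

lemma weakly_connected_graph_constant:
  assumes "weakly_connected_graph A"
    and "\<And>u v. A $ u $ v > 0 \<Longrightarrow> f u = f v"
  shows "f x = f y"
proof -
  have "(x, y) \<in> {(u, v). u \<noteq> v \<and> (A $ u $ v > 0 \<or> A $ v $ u > 0)}\<^sup>*"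
    using assms(1) unfolding weakly_connected_graph_def by blast
  then show ?thesis
    by induction (auto dest: assms(2))
qed

lemma negative_definite_if_diagonally_dominant:
  fixes A :: "real^'n^'n"
  assumes off: "\<forall>i j. i \<noteq> j \<longrightarrow> A $ i $ j \<ge> 0"
    and diag: "\<forall>i. A $ i $ i \<le> 0"
    and conn: "weakly_connected_graph A"
    and dom: "\<forall>i. (\<Sum>j\<in>UNIV - {i}. A $ i $ j + A $ j $ i) \<le> 2 * \<bar>A $ i $ i\<bar>"
    and strict: "\<exists>j. (\<Sum>i\<in>UNIV - {j}. A $ j $ i + A $ i $ j) < 2 * \<bar>A $ j $ j\<bar>"
  shows "negative_definite A"
  unfolding negative_definite_def
proof (intro allI impI)
  fix z :: "real^'n" assume "z \<noteq> 0"
  define c where "c i = (\<Sum>j\<in>UNIV. A$i$j + A$j$i) / 2" for i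
  define d where "d i = - ((z$i)^2 * c i)" for i
  define e where "e i j = A$i$j * (z$i - z$j)^2" for i j
  have off_sum: "(\<Sum>j\<in>UNIV - {i}. A $ i $ j + A $ j $ i) = 2 * c i - 2 * A$i$i" for i
    by (simp add: sum_diff1 c_def)
  have c_nonpos: "c i \<le> 0" for i
    using dom[rule_format, of i] diag[rule_format, of i] off_sum[of i] by auto
  have d_nonneg: "d i \<ge> 0" for i
    by (simp add: d_def c_nonpos mult_nonneg_nonpos)
  have e_nonneg: "e i j \<ge> 0" for i j
    using off by (cases "i = j") (auto simp: e_def)
  have form: "z \<bullet> (A *v z) = - (\<Sum>i\<in>UNIV. d i) - (\<Sum>i\<in>UNIV. \<Sum>j\<in>UNIV. e i j) / 2"
    unfolding quadratic_form_degree_minus_differences c_def d_def e_def by (simp add: sum_negf)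
  have sum_d: "(\<Sum>i\<in>UNIV. d i) \<ge> 0" and sum_e: "(\<Sum>i\<in>UNIV. \<Sum>j\<in>UNIV. e i j) \<ge> 0"
    by (simp_all add: sum_nonneg d_nonneg e_nonneg)
  show "z \<bullet> (A *v z) < 0"
  proof (rule ccontr)
    assume "\<not> z \<bullet> (A *v z) < 0"
    then have "(\<Sum>i\<in>UNIV. d i) = 0" and "(\<Sum>i\<in>UNIV. \<Sum>j\<in>UNIV. e i j) = 0"
      using form sum_d sum_e by linarith+
    then have d0: "d i = 0" and e0: "e i j = 0" for i j
      by (simp_all add: sum_nonneg_eq_0_iff sum_nonneg d_nonneg e_nonneg)
    have "z$u = z$v" if "A$u$v > 0" for u v
      using e0[of u v] that by (simp add: e_def)
    then have const: "z$x = z$y" for x y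
      by (rule weakly_connected_graph_constant[OF conn])
    obtain j where "(\<Sum>i\<in>UNIV - {j}. A $ j $ i + A $ i $ j) < 2 * \<bar>A $ j $ j\<bar>"
      using strict by blast
    then have "c j < 0" using off_sum[of j] diag[rule_format, of j] by auto
    then have "z$j = 0" using d0[of j] by (simp add: d_def)
    then have "z = 0" using const by (metis vec_eq_iff zero_index)
    with \<open>z \<noteq> 0\<close> show False ..
  qed
qed

lemma complex_eigenvector_Re_Im:
  fixes M :: "real^'k^'k"
  assumes "map_matrix complex_of_real M *v v = lam *s v"
  shows "M *v (\<chi> i. Re (v$i)) = Re lam *\<^sub>R (\<chi> i. Re (v$i)) - Im lam *\<^sub>R (\<chi> i. Im (v$i))"
    and "M *v (\<chi> i. Im (v$i)) = Im lam *\<^sub>R (\<chi> i. Re (v$i)) + Re lam *\<^sub>R (\<chi> i. Im (v$i))"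
proof -
  have row: "(\<Sum>j\<in>UNIV. complex_of_real (M$i$j) * v$j) = lam * v$i" for i
    using arg_cong[OF assms, of "\<lambda>w. w$i"] by (simp add: matrix_vector_mult_def)
  show "M *v (\<chi> i. Re (v$i)) = Re lam *\<^sub>R (\<chi> i. Re (v$i)) - Im lam *\<^sub>R (\<chi> i. Im (v$i))"
    using arg_cong[OF row, of Re] by (simp add: vec_eq_iff matrix_vector_mult_def)
  show "M *v (\<chi> i. Im (v$i)) = Im lam *\<^sub>R (\<chi> i. Re (v$i)) + Re lam *\<^sub>R (\<chi> i. Im (v$i))"
    using arg_cong[OF row, of Im] by (simp add: vec_eq_iff matrix_vector_mult_def algebra_simps)
qed

lemma hurwitz_if_Lyapunov:
  fixes M S :: "real^'k^'k"
  assumes sym: "transpose S = S" and pos: "positive_definite S"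
    and neg: "negative_definite (S ** M)"
  shows "hurwitz M"
  unfolding hurwitz_def
proof (intro allI impI, elim conjE)
  fix lam :: complex and v :: "complex^'k"
  assume "v \<noteq> 0" and eig: "map_matrix complex_of_real M *v v = lam *s v"
  define x where "x = (\<chi> i. Re (v$i))"
  define y where "y = (\<chi> i. Im (v$i))"
  have "x \<noteq> 0 \<or> y \<noteq> 0"
    using \<open>v \<noteq> 0\<close> by (auto simp: x_def y_def vec_eq_iff complex_eq_iff)
  moreover have "u \<bullet> (S *v (M *v u)) \<le> 0" and "u \<bullet> (S *v u) \<ge> 0" for u
    using neg pos unfolding negative_definite_def positive_definite_def
    by (cases "u = 0"; force simp: matrix_vector_mul_assoc)+
  ultimately have decay: "x \<bullet> (S *v (M *v x)) + y \<bullet> (S *v (M *v y)) < 0"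
    and energy: "x \<bullet> (S *v x) + y \<bullet> (S *v y) > 0"
    using neg pos unfolding negative_definite_def positive_definite_def
    by (auto simp: matrix_vector_mul_assoc
        intro: add_neg_nonpos add_nonpos_neg add_pos_nonneg add_nonneg_pos)
  have "x \<bullet> (S *v y) = y \<bullet> (S *v x)"
    by (metis inner_matrix_vector_mult inner_commute sym)
  then have "x \<bullet> (S *v (M *v x)) + y \<bullet> (S *v (M *v y)) = Re lam * (x \<bullet> (S *v x) + y \<bullet> (S *v y))"
    unfolding x_def y_def complex_eigenvector_Re_Im[OF eig]
    by (simp add: algebra_simps flip: x_def y_def)
  then show "Re lam < 0"
    using decay energy by (simp add: mult_less_0_iff)
qed

lemma negative_definite_eventually:
  fixes E F :: "real^'k^'k"
  assumes "negative_definite F"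
  shows "\<exists>\<psi>. \<forall>\<phi>>\<psi>. negative_definite (E + \<phi> *\<^sub>R F)"
proof -
  have cont: "continuous_on (sphere 0 1) (\<lambda>x. x \<bullet> (A *v x))" for A :: "real^'k^'k"
    by (intro continuous_intros linear_continuous_on matrix_vector_mul_bounded_linear)
  have "axis undefined 1 \<in> sphere (0::real^'k) 1"
    by simp
  then have ne: "sphere (0::real^'k) 1 \<noteq> {}"
    by blast
  obtain u where u: "u \<in> sphere 0 1" and umax: "\<forall>y\<in>sphere 0 1. y \<bullet> (F *v y) \<le> u \<bullet> (F *v u)"
    using continuous_attains_sup[OF compact_sphere ne cont] by blast
  obtain w where wmax: "\<forall>y\<in>sphere 0 1. y \<bullet> (E *v y) \<le> w \<bullet> (E *v w)"
    using continuous_attains_sup[OF compact_sphere ne cont] by blast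
  define c where "c = - (u \<bullet> (F *v u))"
  define K where "K = w \<bullet> (E *v w)"
  have "u \<noteq> 0"
    using u by auto
  then have "c > 0"
    using assms by (simp add: c_def negative_definite_def)
  have "negative_definite (E + \<phi> *\<^sub>R F)" if "\<phi> > max 0 (K / c)" for \<phi>
    unfolding negative_definite_def
  proof (intro allI impI)
    fix x :: "real^'k" assume "x \<noteq> 0"
    define y where "y = (1 / norm x) *\<^sub>R x"
    have y: "y \<in> sphere 0 1" and x: "x = norm x *\<^sub>R y"
      using \<open>x \<noteq> 0\<close> by (simp_all add: y_def)
    have "\<phi> * (y \<bullet> (F *v y)) \<le> \<phi> * (- c)"
      using umax y that by (intro mult_left_mono) (auto simp: c_def)
    moreover have "y \<bullet> (E *v y) \<le> K" using wmax y by (simp add: K_def)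
    moreover have "\<phi> * c > K" using that \<open>c > 0\<close> by (auto simp: field_simps)
    ultimately have "y \<bullet> ((E + \<phi> *\<^sub>R F) *v y) < 0"
      by (simp add: matrix_vector_mult_add_rdistrib inner_add_right flip: scaleR_matrix_vector_assoc)
    then show "x \<bullet> ((E + \<phi> *\<^sub>R F) *v x) < 0"
      using \<open>x \<noteq> 0\<close> by (subst (1 2) x) (simp add: matrix_vector_mult_scaleR mult_pos_neg)
  qed
  then show ?thesis
    by blast
qed

definition lyapunov_mat :: "real^'n^'m \<Rightarrow> real^'k^'n \<Rightarrow> real^'k^'k" where
  "lyapunov_mat A12 Q = transpose Q ** right_pinv A12 ** A12 ** Q"

definition M_slope :: "real^'n^'m \<Rightarrow> real^'n^'n \<Rightarrow> real^'k^'n \<Rightarrow> real^'k^'k" where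
  "M_slope A12 A22 Q = left_pinv Q ** A22 ** Q ** left_pinv Q ** right_pinv A12 ** A12 ** Q"

lemma M_mat_affine: "M_mat A12 A22 Q \<phi> = M_mat A12 A22 Q 0 + \<phi> *\<^sub>R M_slope A12 A22 Q"
  unfolding matrix_eq M_mat_def R_mat_def M_slope_def
  by (simp add: algebra_simps flip: matrix_vector_mul_assoc scaleR_matrix_vector_assoc)

lemma inj_matrix_vector_mult_matrix_mult:
  assumes "inj ((*v) A)" and "inj ((*v) B)"
  shows "inj ((*v) (A ** B))"
  using inj_compose[OF assms] by (simp add: comp_def matrix_vector_mul_assoc)

lemma lyapunov_mat_symmetric:
  assumes "inj ((*v) (transpose A12))"
  shows "transpose (lyapunov_mat A12 Q) = lyapunov_mat A12 Q"
proof -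
  have "invertible (A12 ** transpose A12)"
    using positive_definite_imp_invertible[OF positive_definite_Gram[OF assms]] by simp
  then have "transpose (matrix_inv (A12 ** transpose A12)) = matrix_inv (A12 ** transpose A12)"
    by (simp add: transpose_matrix_inv_symmetric matrix_transpose_mul)
  then show ?thesis
    by (simp add: lyapunov_mat_def right_pinv_def matrix_transpose_mul matrix_mul_assoc)
qed

lemma lyapunov_mat_positive_definite:
  assumes "inj ((*v) (transpose A12))" and "inj ((*v) (A12 ** Q))"
  shows "positive_definite (lyapunov_mat A12 Q)"
proof -
  have "positive_definite (matrix_inv (A12 ** transpose A12))"
    using positive_definite_matrix_inv[OF positive_definite_Gram[OF assms(1)]] by simp
  then have "positive_definite (transpose (A12 ** Q) ** matrix_inv (A12 ** transpose A12) ** (A12 ** Q))"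
    using assms(2) by (rule positive_definite_congruence)
  then show ?thesis
    by (simp add: lyapunov_mat_def right_pinv_def matrix_transpose_mul matrix_mul_assoc)
qed

lemma lyapunov_mat_M_slope_negative_definite:
  assumes "negative_definite A22"
    and "inj ((*v) (transpose A12))" and "inj ((*v) (A12 ** Q))"
  shows "negative_definite (lyapunov_mat A12 Q ** M_slope A12 A22 Q)"
proof -
  define S where "S = lyapunov_mat A12 Q"
  define Gi where "Gi = matrix_inv (transpose Q ** Q)"
  have "inj ((*v) A12 \<circ> (*v) Q)"
    using assms(3) by (simp add: comp_def matrix_vector_mul_assoc)
  then have inj_Q: "inj ((*v) Q)"
    by (rule inj_on_imageI2)
  then have Gram: "positive_definite (transpose Q ** Q)"
    by (rule positive_definite_Gram)
  have "transpose Gi = Gi"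
    unfolding Gi_def using positive_definite_imp_invertible[OF Gram]
    by (simp add: transpose_matrix_inv_symmetric matrix_transpose_mul)
  moreover have "transpose S = S"
    unfolding S_def using assms(2) by (rule lyapunov_mat_symmetric)
  ultimately have transpose_B: "transpose (Q ** Gi ** S) = S ** Gi ** transpose Q"
    by (simp only: matrix_transpose_mul matrix_mul_assoc)
  have "S ** M_slope A12 A22 Q = S ** Gi ** transpose Q ** A22 ** (Q ** Gi ** S)"
    unfolding S_def Gi_def lyapunov_mat_def M_slope_def left_pinv_def by (simp only: matrix_mul_assoc)
  also have "\<dots> = transpose (Q ** Gi ** S) ** A22 ** (Q ** Gi ** S)"
    by (simp only: transpose_B)
  finally have SM: "S ** M_slope A12 A22 Q = transpose (Q ** Gi ** S) ** A22 ** (Q ** Gi ** S)" .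
  have "invertible Gi" and "invertible S"
    unfolding Gi_def S_def
    using positive_definite_matrix_inv[OF Gram] lyapunov_mat_positive_definite[OF assms(2,3)]
    by (simp_all add: positive_definite_imp_invertible)
  then have "inj ((*v) (Q ** Gi ** S))"
    by (intro inj_matrix_vector_mult_matrix_mult inj_Q inj_matrix_vector_mult)
  then show ?thesis
    unfolding S_def[symmetric] SM using assms(1) by (rule negative_definite_congruence[rotated])
qed

theorem theorem4:
  fixes A12 :: "real^'n^'m" and A22 :: "real^'n^'n" and Q :: "real^'k^'n"
  assumes A12_nonneg: "\<forall>i j. A12 $ i $ j \<ge> 0"
    and A12_rank: "rank A12 = CARD('m)"
    and A22_offdiag: "\<forall>i j. i \<noteq> j \<longrightarrow> A22 $ i $ j \<ge> 0"
    and A22_diag: "\<forall>i. A22 $ i $ i \<le> 0"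
    and A22_conn: "weakly_connected_graph A22"
    and A22_dom: "\<forall>i. (\<Sum>j\<in>UNIV - {i}. A22 $ i $ j + A22 $ j $ i) \<le> 2 * \<bar>A22 $ i $ i\<bar>"
    and A22_strict: "\<exists>j. (\<Sum>i\<in>UNIV - {j}. A22 $ j $ i + A22 $ i $ j) < 2 * \<bar>A22 $ j $ j\<bar>"
    and Q_clust: "clustering_matrix Q"
    and Q_rank: "rank (A12 ** Q) = CARD('k)"
  shows "\<exists>\<psi>::real. \<forall>\<phi>>\<psi>. hurwitz (M_mat A12 A22 Q \<phi>)"
proof -
  have inj_A12Q: "inj ((*v) (A12 ** Q))"
    using Q_rank full_rank_injective by blast
  have inj_A12T: "inj ((*v) (transpose A12))"
    using A12_rank by (simp add: full_rank_injective[symmetric] rank_transpose)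
  have "negative_definite A22"
    using A22_offdiag A22_diag A22_conn A22_dom A22_strict
    by (rule negative_definite_if_diagonally_dominant)
  define S where "S = lyapunov_mat A12 Q"
  have "negative_definite (S ** M_slope A12 A22 Q)"
    unfolding S_def using \<open>negative_definite A22\<close> inj_A12T inj_A12Q
    by (rule lyapunov_mat_M_slope_negative_definite)
  then obtain \<psi> where \<psi>:
      "\<forall>\<phi>>\<psi>. negative_definite (S ** M_mat A12 A22 Q 0 + \<phi> *\<^sub>R (S ** M_slope A12 A22 Q))"
    by (rule negative_definite_eventually[THEN exE])
  have "hurwitz (M_mat A12 A22 Q \<phi>)" if "\<phi> > \<psi>" for \<phi>
  proof (rule hurwitz_if_Lyapunov)
    show "transpose S = S" and "positive_definite S"
      unfolding S_def using inj_A12T inj_A12Q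
      by (simp_all add: lyapunov_mat_symmetric lyapunov_mat_positive_definite)
    have "S ** M_mat A12 A22 Q \<phi> = S ** M_mat A12 A22 Q 0 + \<phi> *\<^sub>R (S ** M_slope A12 A22 Q)"
      by (subst M_mat_affine) (simp add: matrix_add_ldistrib matrix_scalar_ac flip: scalar_matrix_assoc)
    then show "negative_definite (S ** M_mat A12 A22 Q \<phi>)"
      using \<psi> that by simp
  qed
  then show ?thesis
    by blast
qed

end
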